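(* Let $G=(V,E)$ be a simple, unoriented, locally finite graph with graph distance $d$, and let $x\neq x'$ be two vertices of $G$ at finite distance, each of positive degree. For $t\in[0,1]$ let $K^t$ denote the set of couplings between the lazy random walk measures $\mu^t_x$ and $\mu^t_{x'}$, viewed as nonnegative real matrices indexed by $B_x\times B_{x'}$, and let $E_{xx'}$ be the matrix of this size whose only nonzero entry is a $1$ at position $(x,x')$. Then there exists $t_0>0$ such that for all $s,t\in(0,t_0]$, $$K^{s}-E_{xx'}=\frac{s}{t}\,\bigl(K^t-E_{xx'}\bigr),$$ i.e. $K^s$ and $K^t$ are homothetic with center $E_{xx'}$ and ratio $s/t$.
   Context: For a vertex $x$, $S_x=\{y\in V: y\sim x\}$ is the set of neighbours of $x$, $d_x=|S_x|$ its degree, and $B_x=\{x\}\cup S_x$. The graph distance $d(x,x')$ is the length of a shortest edge path from $x$ to $x'$. The lazy random walk is the probability measure $\mu^t_x$ on $V$ with $\mu^t_x(x)=1-t$, $\mu^t_x(y)=t/d_x$ for $y\in S_x$, and $\mu^t_x(y)=0$ otherwise. A coupling between probability measures $\mu,\mu'$ on $V$ is a nonnegative function $\xi$ on $V\times V$ with $\sum_{y'}\xi(y,y')=\mu(y)$ for all $y$ and $\sum_y\xi(y,y')=\mu'(y')$ for all $y'$; a coupling between $\mu^t_x$ and $\mu^t_{x'}$ vanishes outside $B_x\times B_{x'}$ and is identified with its restriction to $B_x\times B_{x'}$. *)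

theory Defs
  imports Main "HOL-Library.Extended_Nat"
begin

definition simple_graph :: "('a \<Rightarrow> 'a \<Rightarrow> bool) \<Rightarrow> bool" where
  "simple_graph E \<longleftrightarrow> (\<forall>x y. E x y \<longrightarrow> E y x) \<and> (\<forall>x. \<not> E x x)"

definition nbrs :: "('a \<Rightarrow> 'a \<Rightarrow> bool) \<Rightarrow> 'a \<Rightarrow> 'a set" where
  "nbrs E x = {y. E x y}"

definition locally_finite :: "('a \<Rightarrow> 'a \<Rightarrow> bool) \<Rightarrow> bool" where
  "locally_finite E \<longleftrightarrow> (\<forall>x. finite (nbrs E x))"

definition deg :: "('a \<Rightarrow> 'a \<Rightarrow> bool) \<Rightarrow> 'a \<Rightarrow> nat" where
  "deg E x = card (nbrs E x)"

definition ball1 :: "('a \<Rightarrow> 'a \<Rightarrow> bool) \<Rightarrow> 'a \<Rightarrow> 'a set" where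
  "ball1 E x = insert x (nbrs E x)"

definition walk :: "('a \<Rightarrow> 'a \<Rightarrow> bool) \<Rightarrow> 'a list \<Rightarrow> bool" where
  "walk E p \<longleftrightarrow> p \<noteq> [] \<and> (\<forall>i. Suc i < length p \<longrightarrow> E (p ! i) (p ! Suc i))"

definition graph_dist :: "('a \<Rightarrow> 'a \<Rightarrow> bool) \<Rightarrow> 'a \<Rightarrow> 'a \<Rightarrow> enat" where
  "graph_dist E x x' = (INF p \<in> {p. walk E p \<and> hd p = x \<and> last p = x'}. enat (length p - 1))"

definition lazy_rw :: "('a \<Rightarrow> 'a \<Rightarrow> bool) \<Rightarrow> real \<Rightarrow> 'a \<Rightarrow> 'a \<Rightarrow> real" where
  "lazy_rw E t x y = (if y = x then 1 - t else if E x y then t / real (deg E x) else 0)"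

text \<open>Couplings between mu^t_x and mu^t_x', identified with their restriction to
B_x \<times> B_x' (they vanish outside).\<close>

definition couplings :: "('a \<Rightarrow> 'a \<Rightarrow> bool) \<Rightarrow> real \<Rightarrow> 'a \<Rightarrow> 'a \<Rightarrow> ('a \<Rightarrow> 'a \<Rightarrow> real) set" where
  "couplings E t x x' = {\<xi>.
     (\<forall>y y'. 0 \<le> \<xi> y y') \<and>
     (\<forall>y y'. (y, y') \<notin> ball1 E x \<times> ball1 E x' \<longrightarrow> \<xi> y y' = 0) \<and>
     (\<forall>y \<in> ball1 E x. (\<Sum>y' \<in> ball1 E x'. \<xi> y y') = lazy_rw E t x y) \<and>
     (\<forall>y' \<in> ball1 E x'. (\<Sum>y \<in> ball1 E x. \<xi> y y') = lazy_rw E t x' y')}"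

definition Emat :: "'a \<Rightarrow> 'a \<Rightarrow> 'a \<Rightarrow> 'a \<Rightarrow> real" where
  "Emat x x' = (\<lambda>y y'. if y = x \<and> y' = x' then 1 else 0)"

end

theory Submission
  imports Defs
begin

text \<open>The map \<open>\<xi> \<mapsto> E\<^sub>x\<^sub>x\<^sub>' + (s/t)(\<xi> - E\<^sub>x\<^sub>x\<^sub>')\<close> sends couplings of
  \<open>\<mu>\<^sup>t\<^sub>x, \<mu>\<^sup>t\<^sub>x\<^sub>'\<close> to couplings of \<open>\<mu>\<^sup>s\<^sub>x, \<mu>\<^sup>s\<^sub>x\<^sub>'\<close>: marginals are preserved because
  \<open>\<mu>\<^sup>s\<^sub>x - \<delta>\<^sub>x = (s/t)(\<mu>\<^sup>t\<^sub>x - \<delta>\<^sub>x)\<close>, and the only entry that can become negative is the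
  one at \<open>(x, x')\<close>. Every coupling puts mass at least \<open>1 - 2t\<close> there (the mass \<open>1 - t\<close> of
  \<open>x\<close> can send at most \<open>t\<close> to the neighbours of \<open>x'\<close>), so for \<open>s \<le> 1/2\<close> that entry
  stays nonnegative. The inverse map has ratio \<open>t/s\<close>, which gives the two inclusions.\<close>

definition homothety :: "('a \<Rightarrow> 'b \<Rightarrow> real) \<Rightarrow> real \<Rightarrow> ('a \<Rightarrow> 'b \<Rightarrow> real) \<Rightarrow> 'a \<Rightarrow> 'b \<Rightarrow> real" where
  "homothety c r \<xi> = (\<lambda>y y'. c y y' + r * (\<xi> y y' - c y y'))"

lemma homothety_minus_center: "homothety c r \<xi> y y' - c y y' = r * (\<xi> y y' - c y y')"
  by (simp add: homothety_def)

lemma sum_homothety: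
  "(\<Sum>y\<in>A. homothety c r \<xi> y y') = (\<Sum>y\<in>A. c y y') + r * ((\<Sum>y\<in>A. \<xi> y y') - (\<Sum>y\<in>A. c y y'))"
  "(\<Sum>y'\<in>A. homothety c r \<xi> y y') = (\<Sum>y'\<in>A. c y y') + r * ((\<Sum>y'\<in>A. \<xi> y y') - (\<Sum>y'\<in>A. c y y'))"
  by (simp_all add: homothety_def sum.distrib sum_distrib_left sum_subtractf algebra_simps)

lemma lazy_rw_homothety:
  assumes "t \<noteq> 0"
  shows "lazy_rw E s x y
         = (if y = x then 1 else 0) + s / t * (lazy_rw E t x y - (if y = x then 1 else 0))"
  using assms by (auto simp: lazy_rw_def field_simps)

lemma finite_ball1: "locally_finite E \<Longrightarrow> finite (ball1 E x)"
  by (simp add: locally_finite_def ball1_def)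

lemma sum_Emat_row:
  "finite B \<Longrightarrow> x' \<in> B \<Longrightarrow> (\<Sum>y'\<in>B. Emat x x' y y') = (if y = x then 1 else 0)"
  by (simp add: Emat_def)

lemma sum_Emat_col:
  "finite B \<Longrightarrow> x \<in> B \<Longrightarrow> (\<Sum>y\<in>B. Emat x x' y y') = (if y' = x' then 1 else 0)"
  by (simp add: Emat_def)

lemma coupling_corner_ge:
  assumes sg: "simple_graph E" and lf: "locally_finite E" and deg: "deg E x' > 0"
    and \<xi>: "\<xi> \<in> couplings E t x x'"
  shows "1 - 2 * t \<le> \<xi> x x'"
proof -
  have fin: "finite (nbrs E x')" "finite (ball1 E x)"
    using lf by (auto simp: locally_finite_def ball1_def)
  have x'_not_nbr: "x' \<notin> nbrs E x'"
    using sg by (auto simp: simple_graph_def nbrs_def)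
  have x_in: "x \<in> ball1 E x" by (simp add: ball1_def)
  have "(\<Sum>y'\<in>ball1 E x'. \<xi> x y') = 1 - t"
    using \<xi> x_in by (simp add: couplings_def lazy_rw_def)
  then have row_x: "\<xi> x x' + (\<Sum>y'\<in>nbrs E x'. \<xi> x y') = 1 - t"
    using fin x'_not_nbr by (simp add: ball1_def)
  have entry_le: "\<xi> x y' \<le> t / real (deg E x')" if y': "y' \<in> nbrs E x'" for y'
  proof -
    have "\<xi> x y' \<le> (\<Sum>y\<in>ball1 E x. \<xi> y y')"
      using \<xi> fin x_in by (intro member_le_sum) (auto simp: couplings_def)
    also have "\<dots> = lazy_rw E t x' y'"
      using \<xi> y' by (simp add: couplings_def ball1_def)
    also have "\<dots> = t / real (deg E x')"
      using y' x'_not_nbr by (auto simp: lazy_rw_def nbrs_def)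
    finally show ?thesis .
  qed
  have "(\<Sum>y'\<in>nbrs E x'. \<xi> x y') \<le> (\<Sum>y'\<in>nbrs E x'. t / real (deg E x'))"
    using entry_le by (rule sum_mono)
  also have "\<dots> = t" using deg by (simp add: deg_def)
  finally show ?thesis using row_x by linarith
qed

lemma homothety_nonneg_at_corner:
  fixes s t \<xi> :: real
  assumes "1 - 2 * t \<le> \<xi>" and "0 < s" "s \<le> 1/2" "0 < t"
  shows "0 \<le> 1 + s / t * (\<xi> - 1)"
proof -
  have "- 2 * s = s / t * (- 2 * t)" using assms by simp
  also have "\<dots> \<le> s / t * (\<xi> - 1)"
    using assms by (intro mult_left_mono) auto
  finally show ?thesis using assms by linarith
qed

lemma homothety_couplings:
  assumes sg: "simple_graph E" and lf: "locally_finite E" and deg: "deg E x' > 0"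
    and s: "0 < s" "s \<le> 1/2" and t: "0 < t"
    and \<xi>: "\<xi> \<in> couplings E t x x'"
  shows "homothety (Emat x x') (s / t) \<xi> \<in> couplings E s x x'"
proof -
  let ?\<eta> = "homothety (Emat x x') (s / t) \<xi>"
  have fin: "finite (ball1 E x)" "finite (ball1 E x')" using lf by (simp_all add: finite_ball1)
  have centre: "x \<in> ball1 E x" "x' \<in> ball1 E x'" by (simp_all add: ball1_def)
  have nonneg: "0 \<le> ?\<eta> y y'" for y y'
  proof (cases "y = x \<and> y' = x'")
    case True
    then show ?thesis
      using homothety_nonneg_at_corner[OF coupling_corner_ge[OF sg lf deg \<xi>] s t]
      by (simp add: homothety_def Emat_def)
  next
    case False
    then show ?thesis using \<xi> s t by (auto simp: homothety_def Emat_def couplings_def)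
  qed
  have outside: "?\<eta> y y' = 0" if "(y, y') \<notin> ball1 E x \<times> ball1 E x'" for y y'
    using that \<xi> centre by (auto simp: homothety_def Emat_def couplings_def)
  have rows: "(\<Sum>y'\<in>ball1 E x'. ?\<eta> y y') = lazy_rw E s x y" if y: "y \<in> ball1 E x" for y
  proof -
    have "(\<Sum>y'\<in>ball1 E x'. \<xi> y y') = lazy_rw E t x y"
      using \<xi> y by (simp add: couplings_def)
    then show ?thesis
      using t fin centre by (simp only: sum_homothety sum_Emat_row lazy_rw_homothety[where t = t and s = s])
  qed
  have cols: "(\<Sum>y\<in>ball1 E x. ?\<eta> y y') = lazy_rw E s x' y'" if y': "y' \<in> ball1 E x'" for y'
  proof -
    have "(\<Sum>y\<in>ball1 E x. \<xi> y y') = lazy_rw E t x' y'"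
      using \<xi> y' by (simp add: couplings_def)
    then show ?thesis
      using t fin centre by (simp only: sum_homothety sum_Emat_col lazy_rw_homothety[where t = t and s = s])
  qed
  show ?thesis unfolding couplings_def using nonneg outside rows cols by blast
qed

theorem lemma1:
  fixes E :: "'a \<Rightarrow> 'a \<Rightarrow> bool" and x x' :: 'a
  assumes "simple_graph E" and "locally_finite E"
    and "x \<noteq> x'" and "graph_dist E x x' < \<infinity>"
    and "deg E x > 0" and "deg E x' > 0"
  shows "\<exists>t0 > 0. \<forall>s t. 0 < s \<and> s \<le> t0 \<and> 0 < t \<and> t \<le> t0 \<longrightarrow>
           (\<lambda>\<xi> y y'. \<xi> y y' - Emat x x' y y') ` couplings E s x x'
         = (\<lambda>\<xi> y y'. (s / t) * (\<xi> y y' - Emat x x' y y')) ` couplings E t x x'"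
proof (intro exI[of _ "1/2"] conjI allI impI)
  fix s t :: real
  assume st: "0 < s \<and> s \<le> 1/2 \<and> 0 < t \<and> t \<le> 1/2"
  note to_couplings = homothety_couplings[OF assms(1,2,6)]
  let ?shift = "\<lambda>\<eta> y y'. \<eta> y y' - Emat x x' y y'"
    and ?scale = "\<lambda>\<xi> y y'. (s / t) * (\<xi> y y' - Emat x x' y y')"
  show "?shift ` couplings E s x x' = ?scale ` couplings E t x x'"
  proof (intro equalityI image_subsetI)
    fix \<eta> assume \<eta>: "\<eta> \<in> couplings E s x x'"
    have "?shift \<eta> = ?scale (homothety (Emat x x') (t / s) \<eta>)"
      using st by (simp add: homothety_minus_center fun_eq_iff)
    moreover have "homothety (Emat x x') (t / s) \<eta> \<in> couplings E t x x'"
      using to_couplings[of t s \<eta>] st \<eta> by simp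
    ultimately show "?shift \<eta> \<in> ?scale ` couplings E t x x'" by (rule image_eqI)
  next
    fix \<xi> assume \<xi>: "\<xi> \<in> couplings E t x x'"
    have "?scale \<xi> = ?shift (homothety (Emat x x') (s / t) \<xi>)"
      by (simp add: homothety_minus_center)
    moreover have "homothety (Emat x x') (s / t) \<xi> \<in> couplings E s x x'"
      using to_couplings[of s t \<xi>] st \<xi> by simp
    ultimately show "?scale \<xi> \<in> ?shift ` couplings E s x x'" by (rule image_eqI)
  qed
qed simp

end
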